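(* Let $X$ be a locally convex space and let $T\in\mathcal{M}(X)$. Assume that for every open convex $V\subset X$ with $V\cap D(T)\neq\emptyset$ one has $\operatorname{Pr}_{X}[\varphi_{T|_{V}}<c]\cap V\subset\overline{D(T)}$. Then $\overline{D(T)}$ is convex. In particular, if $T\in\mathcal{M}(X)$ is locatable in $\overline{D(T)}$, or if $T\in\mathcal{M}(X)$ is locally-NI, then $\overline{D(T)}$ is convex.
   Context: $X$ is a non-trivial Hausdorff locally convex space, $X^*$ its dual with weak-star topology, $c(x,x^* )=\langle x,x^*\rangle$ on $Z=X\times X^*$. Operators are identified with their graphs; $D(T)$ is the domain, $\overline{D(T)}$ its closure; $T|_V$ has graph $\operatorname{Graph}T\cap(V\times X^* )$. $\varphi_{T}(x,x^{*})=\sup\{\langle x,u^{*}\rangle+\langle u,x^{*}\rangle-\langle u,u^{*}\rangle\mid(u,u^{*})\in T\}$ ($\sup\emptyset=-\infty$). $[f<g]=\{z\mid f(z)<g(z)\}$, etc. $\mathcal{M}(X)$: monotone operators with non-empty graph. $V$ locates $T$ in $S$ if $\operatorname{Pr}_X([\varphi_{T|_V}\le c])\cap V\subset S$; $T$ is locatable in $S$ if every open convex $V$ with $V\cap D(T)\ne\emptyset$ locates $T$ in $S$. $T$ is $V$-NI if $\varphi_{T|_V}\ge c$ on $V\times X^*$; locally-NI if $T$ is $V$-NI for every open convex $V$ with $V\cap D(T)\neq\emptyset$. *)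

theory Defs
  imports "HOL-Analysis.Analysis"
begin

definition lcs :: "'x::real_vector topology \<Rightarrow> bool" where
  "lcs tau \<longleftrightarrow> topspace tau = UNIV
     \<and> Hausdorff_space tau
     \<and> (\<exists>x::'x. x \<noteq> 0)
     \<and> continuous_map (prod_topology tau tau) tau (\<lambda>(x, y). x + y)
     \<and> continuous_map (prod_topology euclideanreal tau) tau (\<lambda>(a, x). a *\<^sub>R x)
     \<and> (\<forall>x U. openin tau U \<and> x \<in> U \<longrightarrow>
           (\<exists>W. openin tau W \<and> convex W \<and> x \<in> W \<and> W \<subseteq> U))"

definition dual :: "'x::real_vector topology \<Rightarrow> ('x \<Rightarrow> real) set" where
  "dual tau = {f. linear f \<and> continuous_map tau euclideanreal f}"

definition cpl :: "'x \<times> ('x \<Rightarrow> real) \<Rightarrow> real" where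
  "cpl z = snd z (fst z)"

text \<open>Fitzpatrick function, with sup over the empty set = -infinity.\<close>
definition fitz :: "('x::real_vector \<times> ('x \<Rightarrow> real)) set \<Rightarrow> 'x \<times> ('x \<Rightarrow> real) \<Rightarrow> ereal" where
  "fitz T z = Sup ((\<lambda>(u, us). ereal (us (fst z) + snd z u - us u)) ` T)"

definition restr :: "('x \<times> ('x \<Rightarrow> real)) set \<Rightarrow> 'x set \<Rightarrow> ('x \<times> ('x \<Rightarrow> real)) set" where
  "restr T V = T \<inter> (V \<times> UNIV)"

definition monotone_op :: "('x::real_vector \<times> ('x \<Rightarrow> real)) set \<Rightarrow> bool" where
  "monotone_op T \<longleftrightarrow> (\<forall>(x, xs)\<in>T. \<forall>(y, ys)\<in>T. 0 \<le> xs x - xs y - ys x + ys y)"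

definition MX :: "'x::real_vector topology \<Rightarrow> ('x \<times> ('x \<Rightarrow> real)) set set" where
  "MX tau = {T. T \<subseteq> UNIV \<times> dual tau \<and> monotone_op T \<and> T \<noteq> {}}"

text \<open>Pr_X [phi_{T|V} < c] and Pr_X [phi_{T|V} \<le> c], with z ranging over X \<times> X^*.\<close>
definition prX_lt :: "'x::real_vector topology \<Rightarrow> ('x \<times> ('x \<Rightarrow> real)) set \<Rightarrow> 'x set \<Rightarrow> 'x set" where
  "prX_lt tau T V = {x. \<exists>xs\<in>dual tau. fitz (restr T V) (x, xs) < ereal (cpl (x, xs))}"

definition prX_le :: "'x::real_vector topology \<Rightarrow> ('x \<times> ('x \<Rightarrow> real)) set \<Rightarrow> 'x set \<Rightarrow> 'x set" where
  "prX_le tau T V = {x. \<exists>xs\<in>dual tau. fitz (restr T V) (x, xs) \<le> ereal (cpl (x, xs))}"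

definition locates :: "'x::real_vector topology \<Rightarrow> 'x set \<Rightarrow> ('x \<times> ('x \<Rightarrow> real)) set \<Rightarrow> 'x set \<Rightarrow> bool" where
  "locates tau V T S \<longleftrightarrow> prX_le tau T V \<inter> V \<subseteq> S"

definition locatable :: "'x::real_vector topology \<Rightarrow> ('x \<times> ('x \<Rightarrow> real)) set \<Rightarrow> 'x set \<Rightarrow> bool" where
  "locatable tau T S \<longleftrightarrow>
     (\<forall>V. openin tau V \<and> convex V \<and> V \<inter> Domain T \<noteq> {} \<longrightarrow> locates tau V T S)"

definition V_NI :: "'x::real_vector topology \<Rightarrow> 'x set \<Rightarrow> ('x \<times> ('x \<Rightarrow> real)) set \<Rightarrow> bool" where
  "V_NI tau V T \<longleftrightarrow> (\<forall>x\<in>V. \<forall>xs\<in>dual tau. ereal (cpl (x, xs)) \<le> fitz (restr T V) (x, xs))"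

definition locally_NI :: "'x::real_vector topology \<Rightarrow> ('x \<times> ('x \<Rightarrow> real)) set \<Rightarrow> bool" where
  "locally_NI tau T \<longleftrightarrow>
     (\<forall>V. openin tau V \<and> convex V \<and> V \<inter> Domain T \<noteq> {} \<longrightarrow> V_NI tau V T)"

end

theory Submission
  imports Defs
begin

text \<open>
  If the closure of \<open>D(T)\<close> were not convex, some convex combination \<open>x = (1 - l) a + l b\<close> of
  points \<open>a, b \<in> D(T)\<close> would have an open convex neighbourhood \<open>W\<close> missing \<open>D(T)\<close>.
  Hahn--Banach yields \<open>f \<in> X\<^sup>*\<close> with \<open>f(x - a) = 1\<close>, and from \<open>W\<close> one builds an open convex
  \<open>V \<ni> x, a\<close> on which \<open>f\<close> is at least \<open>\<eta> > 0\<close> below \<open>f(x)\<close> outside \<open>W\<close>, hence on \<open>D(T) \<inter> V\<close>.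
  For \<open>x\<^sup>* = (1 - l) a\<^sup>* + l b\<^sup>* + s f\<close> with \<open>s\<close> large, monotonicity of \<open>T\<close> gives
  \<open>\<phi>\<^bsub>T|V\<^esub>(x, x\<^sup>*) < \<langle>x, x\<^sup>*\<rangle>\<close>, so the hypothesis puts \<open>x\<close> into the closure of \<open>D(T)\<close>.
  Locatability and the local NI property are both special cases of that hypothesis.
\<close>

section \<open>Locally convex spaces\<close>

lemma lcs_topspace [simp]: "lcs tau \<Longrightarrow> topspace tau = UNIV"
  by (simp add: lcs_def)

lemma lcs_convex_nbhd:
  "lcs tau \<Longrightarrow> openin tau U \<Longrightarrow> x \<in> U \<Longrightarrow> \<exists>W. openin tau W \<and> convex W \<and> x \<in> W \<and> W \<subseteq> U"
  by (simp add: lcs_def)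

lemma continuous_map_scaleR_lcs:
  "lcs tau \<Longrightarrow> continuous_map (prod_topology euclideanreal tau) tau (\<lambda>(a, x). a *\<^sub>R x)"
  by (simp add: lcs_def)

lemma continuous_map_plus_lcs:
  "lcs tau \<Longrightarrow> continuous_map (prod_topology tau tau) tau (\<lambda>(x, y). x + y)"
  by (simp add: lcs_def)

lemma continuous_map_affine_lcs:
  assumes "lcs tau"
  shows "continuous_map tau tau (\<lambda>v. a *\<^sub>R v + b)"
proof -
  have "continuous_map tau (prod_topology euclideanreal tau) (\<lambda>v. (a, v))"
    using assms by (intro continuous_map_pairedI) auto
  from continuous_map_compose[OF this continuous_map_scaleR_lcs[OF assms]]
  have scale: "continuous_map tau tau (\<lambda>v. a *\<^sub>R v)"
    by (simp add: o_def)
  have "continuous_map tau (prod_topology tau tau) (\<lambda>v. (a *\<^sub>R v, b))"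
    using assms by (intro continuous_map_pairedI scale) auto
  from continuous_map_compose[OF this continuous_map_plus_lcs[OF assms]] show ?thesis
    by (simp add: o_def)
qed

lemma openin_affine_vimage_lcs:
  assumes "lcs tau" "openin tau U"
  shows "openin tau {v. a *\<^sub>R v + b \<in> U}"
  using openin_continuous_map_preimage[OF continuous_map_affine_lcs[OF assms(1)] assms(2)] assms(1)
  by simp

lemma continuous_map_linear_combination_lcs:
  assumes "lcs tau"
  shows "continuous_map (prod_topology tau tau) tau (\<lambda>z. c *\<^sub>R fst z + d *\<^sub>R snd z)"
proof -
  have "continuous_map (prod_topology tau tau) (prod_topology tau tau) (\<lambda>z. (c *\<^sub>R fst z, d *\<^sub>R snd z))"
    using continuous_map_compose[OF continuous_map_fst continuous_map_affine_lcs[OF assms, of c 0]]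
      continuous_map_compose[OF continuous_map_snd continuous_map_affine_lcs[OF assms, of d 0]]
    by (intro continuous_map_pairedI) (auto simp: o_def)
  from continuous_map_compose[OF this continuous_map_plus_lcs[OF assms]] show ?thesis
    by (simp add: o_def)
qed

lemma openin_dual_vimage:
  assumes "lcs tau" "f \<in> dual tau" "open S"
  shows "openin tau {v. f v \<in> S}"
  using openin_continuous_map_preimage[of tau euclideanreal f S] assms by (simp add: dual_def)

lemma scaleR_nbhd_lcs:
  assumes "lcs tau" "openin tau N" "c0 *\<^sub>R d \<in> N"
  shows "\<exists>r>0. \<exists>D. openin tau D \<and> d \<in> D \<and> (\<forall>c y. \<bar>c - c0\<bar> < r \<and> y \<in> D \<longrightarrow> c *\<^sub>R y \<in> N)"
proof -
  have "openin (prod_topology euclideanreal tau) {(a, x). a *\<^sub>R x \<in> N}"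
    using openin_continuous_map_preimage[OF continuous_map_scaleR_lcs[OF assms(1)] assms(2)] assms(1)
    by (simp add: case_prod_unfold)
  moreover have "(c0, d) \<in> {(a, x). a *\<^sub>R x \<in> N}" using assms(3) by simp
  ultimately obtain R D where RD: "openin euclideanreal R" "openin tau D" "c0 \<in> R" "d \<in> D"
      "R \<times> D \<subseteq> {(a, x). a *\<^sub>R x \<in> N}"
    unfolding openin_prod_topology_alt by meson
  obtain r where "r > 0" "ball c0 r \<subseteq> R"
    using RD(1,3) open_contains_ball by (metis open_openin)
  then have "c *\<^sub>R y \<in> N" if "\<bar>c - c0\<bar> < r" "y \<in> D" for c y
    using RD(5) that by (force simp: dist_real_def abs_minus_commute)
  with RD \<open>r > 0\<close> show ?thesis
    by blast
qed

lemma convex_affine_vimage: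
  fixes W :: "'x::real_vector set"
  assumes "convex W"
  shows "convex {v. c *\<^sub>R v + b \<in> W}"
proof -
  have "{v. c *\<^sub>R v + b \<in> W} = (\<lambda>v. c *\<^sub>R v) -` ((+) (- b) ` W)"
    by (force simp: image_iff)
  then show ?thesis
    by (simp add: assms convex_linear_vimage convex_translation)
qed

lemma convex_hull_union_two_real_vector:
  fixes S T :: "'x::real_vector set"
  assumes "convex S" "S \<noteq> {}" "convex T" "T \<noteq> {}"
  shows "convex hull (S \<union> T) =
    {u *\<^sub>R s + v *\<^sub>R t | u v s t. u \<ge> 0 \<and> v \<ge> 0 \<and> u + v = 1 \<and> s \<in> S \<and> t \<in> T}"
proof -
  define F where "F b = (if b then S else T)" for b
  have union: "S \<union> T = \<Union>(F ` UNIV)"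
    by (auto simp: F_def UNIV_bool)
  have "convex hull (S \<union> T) =
      {\<Sum>b\<in>UNIV. c b *\<^sub>R s b | c s. (\<forall>b\<in>UNIV. c b \<ge> 0) \<and> sum c UNIV = 1 \<and> (\<forall>b\<in>UNIV. s b \<in> F b)}"
    unfolding union using assms by (intro convex_hull_finite_union) (auto simp: F_def)
  also have "\<dots> = {u *\<^sub>R s + v *\<^sub>R t | u v s t. u \<ge> 0 \<and> v \<ge> 0 \<and> u + v = 1 \<and> s \<in> S \<and> t \<in> T}"
  proof (intro equalityI subsetI)
    fix x assume "x \<in> {\<Sum>b\<in>UNIV. c b *\<^sub>R s b | c s. (\<forall>b\<in>UNIV. c b \<ge> 0) \<and> sum c UNIV = 1 \<and> (\<forall>b\<in>UNIV. s b \<in> F b)}"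
    then show "x \<in> {u *\<^sub>R s + v *\<^sub>R t | u v s t. u \<ge> 0 \<and> v \<ge> 0 \<and> u + v = 1 \<and> s \<in> S \<and> t \<in> T}"
      by (auto simp: UNIV_bool F_def) (metis add.commute)
  next
    fix x assume "x \<in> {u *\<^sub>R s + v *\<^sub>R t | u v s t. u \<ge> 0 \<and> v \<ge> 0 \<and> u + v = 1 \<and> s \<in> S \<and> t \<in> T}"
    then obtain u v s t where "x = u *\<^sub>R s + v *\<^sub>R t" "u \<ge> 0" "v \<ge> 0" "u + v = 1" "s \<in> S" "t \<in> T"
      by blast
    then show "x \<in> {\<Sum>b\<in>UNIV. c b *\<^sub>R s b | c s. (\<forall>b\<in>UNIV. c b \<ge> 0) \<and> sum c UNIV = 1 \<and> (\<forall>b\<in>UNIV. s b \<in> F b)}"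
      by (intro CollectI exI[of _ "\<lambda>b. if b then u else v"] exI[of _ "\<lambda>b. if b then s else t"])
        (auto simp: UNIV_bool F_def)
  qed
  finally show ?thesis .
qed

lemma openin_convex_hull_union_lcs:
  fixes tau :: "'x::real_vector topology"
  assumes lcs: "lcs tau" and S: "openin tau S" "convex S" "S \<noteq> {}"
    and T: "openin tau T" "convex T" "T \<noteq> {}"
  shows "openin tau (convex hull (S \<union> T))"
proof (subst openin_subopen, intro ballI)
  have hull: "convex hull (S \<union> T) =
      {u *\<^sub>R s + v *\<^sub>R t | u v s t. u \<ge> 0 \<and> v \<ge> 0 \<and> u + v = 1 \<and> s \<in> S \<and> t \<in> T}"
    using S T by (intro convex_hull_union_two_real_vector) auto
  fix q assume "q \<in> convex hull (S \<union> T)"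
  then obtain u v s t where q: "q = u *\<^sub>R s + v *\<^sub>R t" "u \<ge> 0" "v \<ge> 0" "u + v = 1" "s \<in> S" "t \<in> T"
    unfolding hull by blast
  show "\<exists>U. openin tau U \<and> q \<in> U \<and> U \<subseteq> convex hull (S \<union> T)"
  proof (cases "u = 0")
    case True
    then show ?thesis
      using q T(1) by (intro exI[of _ T]) (auto intro: hull_inc)
  next
    case False
    define U where "U = {q'. (1/u) *\<^sub>R q' + (- ((v/u) *\<^sub>R t)) \<in> S}"
    have "q' \<in> convex hull (S \<union> T)" if "q' \<in> U" for q'
    proof -
      have "q' = u *\<^sub>R ((1/u) *\<^sub>R q' - (v/u) *\<^sub>R t) + v *\<^sub>R t"
        using False by (simp add: algebra_simps)
      with that q show ?thesis
        unfolding hull U_def by fastforce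
    qed
    moreover have "q \<in> U"
      using q False by (simp add: U_def algebra_simps)
    ultimately show ?thesis
      using openin_affine_vimage_lcs[OF lcs S(1)] unfolding U_def by blast
  qed
qed

section \<open>The Hahn--Banach theorem\<close>

text \<open>Partial linear functionals dominated by \<open>p\<close> are represented by their graphs, so that
  extension is inclusion and Zorn's lemma applies.\<close>

definition dominated_linear_graph :: "('x::real_vector \<Rightarrow> real) \<Rightarrow> ('x \<times> real) set \<Rightarrow> bool" where
  "dominated_linear_graph p G \<longleftrightarrow>
     (\<forall>v r v' r'. (v, r) \<in> G \<and> (v', r') \<in> G \<longrightarrow> (v + v', r + r') \<in> G)
   \<and> (\<forall>v r c. (v, r) \<in> G \<longrightarrow> (c *\<^sub>R v, c * r) \<in> G)
   \<and> (\<forall>v r r'. (v, r) \<in> G \<and> (v, r') \<in> G \<longrightarrow> r = r')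
   \<and> (\<forall>v r. (v, r) \<in> G \<longrightarrow> r \<le> p v)"

lemma dominated_linear_graphD:
  assumes "dominated_linear_graph p G"
  shows dominated_linear_graph_add: "\<And>v r v' r'. (v, r) \<in> G \<Longrightarrow> (v', r') \<in> G \<Longrightarrow> (v + v', r + r') \<in> G"
    and dominated_linear_graph_scaleR: "\<And>v r c. (v, r) \<in> G \<Longrightarrow> (c *\<^sub>R v, c * r) \<in> G"
    and dominated_linear_graph_unique: "\<And>v r r'. (v, r) \<in> G \<Longrightarrow> (v, r') \<in> G \<Longrightarrow> r = r'"
    and dominated_linear_graph_le: "\<And>v r. (v, r) \<in> G \<Longrightarrow> r \<le> p v"
  using assms unfolding dominated_linear_graph_def by blast+

lemma dominated_linear_graph_Union:
  assumes "C \<noteq> {}" "chain\<^sub>\<subseteq> C" "\<And>G. G \<in> C \<Longrightarrow> dominated_linear_graph p G"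
  shows "dominated_linear_graph p (\<Union>C)"
proof -
  have common: "\<exists>G\<in>C. z \<in> G \<and> z' \<in> G" if "z \<in> \<Union>C" "z' \<in> \<Union>C" for z z'
    using that assms(2) unfolding chain_subset_def by blast
  show ?thesis
    unfolding dominated_linear_graph_def
  proof (intro conjI allI impI)
    fix v r v' r' assume "(v, r) \<in> \<Union>C \<and> (v', r') \<in> \<Union>C"
    then show "(v + v', r + r') \<in> \<Union>C"
      using common dominated_linear_graph_add[OF assms(3)] by blast
  next
    fix v r c assume "(v, r) \<in> \<Union>C"
    then show "(c *\<^sub>R v, c * r) \<in> \<Union>C"
      using dominated_linear_graph_scaleR[OF assms(3)] by blast
  next
    fix v r r' assume "(v, r) \<in> \<Union>C \<and> (v, r') \<in> \<Union>C"
    then show "r = r'"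
      using common dominated_linear_graph_unique[OF assms(3)] by blast
  next
    fix v r assume "(v, r) \<in> \<Union>C"
    then show "r \<le> p v"
      using dominated_linear_graph_le[OF assms(3)] by blast
  qed
qed

lemma dominated_linear_graph_extension_constant:
  fixes p :: "'x::real_vector \<Rightarrow> real"
  assumes sub: "\<And>v w. p (v + w) \<le> p v + p w"
    and M: "dominated_linear_graph p M" "M \<noteq> {}"
  shows "\<exists>c. \<forall>v r. (v, r) \<in> M \<longrightarrow> r - p (v - v0) \<le> c \<and> c \<le> p (v + v0) - r"
proof -
  have bound: "r' - p (v' - v0) \<le> p (v + v0) - r" if "(v, r) \<in> M" "(v', r') \<in> M" for v r v' r'
  proof -
    have "r + r' \<le> p ((v + v0) + (v' - v0))"
      using dominated_linear_graph_le[OF M(1) dominated_linear_graph_add[OF M(1) that]] by simp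
    with sub[of "v + v0" "v' - v0"] show ?thesis
      by linarith
  qed
  define L where "L = (\<lambda>(v, r). r - p (v - v0)) ` M"
  obtain a b where ab: "(a, b) \<in> M"
    using M(2) by auto
  have "bdd_above L"
    unfolding L_def bdd_above_def using bound[OF ab] by (intro exI[of _ "p (a + v0) - b"]) auto
  moreover have "L \<noteq> {}"
    using M(2) unfolding L_def by auto
  ultimately show ?thesis
    using bound unfolding L_def
    by (intro exI[of _ "Sup L"] allI impI conjI cSup_upper cSup_least) (force simp: L_def)+
qed

lemma dominated_linear_graph_extension_le:
  fixes p :: "'x::real_vector \<Rightarrow> real"
  assumes hom: "\<And>c v. c > 0 \<Longrightarrow> p (c *\<^sub>R v) = c * p v"
    and M: "dominated_linear_graph p M"
    and c: "\<And>v r. (v, r) \<in> M \<Longrightarrow> r - p (v - v0) \<le> c \<and> c \<le> p (v + v0) - r"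
    and ws: "(w, s) \<in> M"
  shows "s + t * c \<le> p (w + t *\<^sub>R v0)"
proof -
  have scaled: "((1/\<bar>t\<bar>) *\<^sub>R w, (1/\<bar>t\<bar>) * s) \<in> M"
    using dominated_linear_graph_scaleR[OF M ws] .
  consider "t > 0" | "t = 0" | "t < 0"
    by linarith
  then show ?thesis
  proof cases
    case 1
    then have "t * c \<le> t * p ((1/t) *\<^sub>R w + v0) - s"
      using c[OF scaled] by (simp add: field_simps mult_left_mono)
    also have "t * p ((1/t) *\<^sub>R w + v0) = p (w + t *\<^sub>R v0)"
      using hom[OF 1, of "(1/t) *\<^sub>R w + v0"] 1 by (simp add: scaleR_add_right)
    finally show ?thesis
      by simp
  next
    case 2
    then show ?thesis
      using dominated_linear_graph_le[OF M ws] by simp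
  next
    case 3
    then have "s - (- t) * p ((1/(- t)) *\<^sub>R w - v0) \<le> (- t) * c"
      using c[OF scaled] by (simp add: field_simps mult_left_mono)
    also have "(- t) * p ((1/(- t)) *\<^sub>R w - v0) = p (w + t *\<^sub>R v0)"
      using hom[of "- t" "(1/(- t)) *\<^sub>R w - v0"] 3 by (simp add: scaleR_diff_right)
    finally show ?thesis
      by simp
  qed
qed

lemma dominated_linear_graph_coordinate_unique:
  assumes M: "dominated_linear_graph p M" and v0: "v0 \<notin> Domain M"
    and ws: "(w, s) \<in> M" "(w', s') \<in> M" and eq: "w + t *\<^sub>R v0 = w' + t' *\<^sub>R v0"
  shows "t = t'"
proof (rule ccontr)
  assume "t \<noteq> t'"
  have "(w + (-1) *\<^sub>R w', s + (-1) * s') \<in> M"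
    using dominated_linear_graph_add[OF M ws(1) dominated_linear_graph_scaleR[OF M ws(2)]] .
  from dominated_linear_graph_scaleR[OF M this, of "1 / (t' - t)"]
  have "((1 / (t' - t)) *\<^sub>R (w - w'), (1 / (t' - t)) * (s - s')) \<in> M"
    by simp
  moreover have "w - w' = (t' - t) *\<^sub>R v0"
    using eq by (simp add: algebra_simps)
  ultimately have "(v0, (1 / (t' - t)) * (s - s')) \<in> M"
    using \<open>t \<noteq> t'\<close> by simp
  with v0 show False
    by blast
qed

lemma dominated_linear_graph_extend:
  fixes p :: "'x::real_vector \<Rightarrow> real"
  assumes sub: "\<And>v w. p (v + w) \<le> p v + p w"
    and hom: "\<And>c v. c > 0 \<Longrightarrow> p (c *\<^sub>R v) = c * p v"
    and M: "dominated_linear_graph p M" "M \<noteq> {}" and v0: "v0 \<notin> Domain M"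
  shows "\<exists>M'. dominated_linear_graph p M' \<and> M \<subseteq> M' \<and> v0 \<in> Domain M'"
proof -
  obtain c where c: "\<And>v r. (v, r) \<in> M \<Longrightarrow> r - p (v - v0) \<le> c \<and> c \<le> p (v + v0) - r"
    using dominated_linear_graph_extension_constant[OF sub M] by blast
  define M' where "M' = {(v + t *\<^sub>R v0, r + t * c) | v r t. (v, r) \<in> M}"
  have in_M': "(v + t *\<^sub>R v0, r + t * c) \<in> M'" if "(v, r) \<in> M" for v r t
    using that unfolding M'_def by blast
  have "(0, 0) \<in> M"
    using M(2) dominated_linear_graph_scaleR[OF M(1), of _ _ 0] by fastforce
  from in_M'[OF this, of 1] have "v0 \<in> Domain M'"
    by force
  moreover have "M \<subseteq> M'"
    using in_M'[of _ _ 0] by force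
  moreover have "dominated_linear_graph p M'"
    unfolding dominated_linear_graph_def
  proof (intro conjI allI impI)
    fix v r v' r' assume "(v, r) \<in> M' \<and> (v', r') \<in> M'"
    then obtain w s t w' s' t' where "(w, s) \<in> M" "(w', s') \<in> M"
      "v = w + t *\<^sub>R v0" "r = s + t * c" "v' = w' + t' *\<^sub>R v0" "r' = s' + t' * c"
      unfolding M'_def by blast
    then show "(v + v', r + r') \<in> M'"
      using in_M'[OF dominated_linear_graph_add[OF M(1)], of w s w' s' "t + t'"]
      by (simp add: algebra_simps)
  next
    fix v r k assume "(v, r) \<in> M'"
    then obtain w s t where "(w, s) \<in> M" "v = w + t *\<^sub>R v0" "r = s + t * c"
      unfolding M'_def by blast
    then show "(k *\<^sub>R v, k * r) \<in> M'"
      using in_M'[OF dominated_linear_graph_scaleR[OF M(1)], of w s k "k * t"]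
      by (simp add: algebra_simps)
  next
    fix v r r' assume "(v, r) \<in> M' \<and> (v, r') \<in> M'"
    then obtain w s t w' s' t' where ws: "(w, s) \<in> M" "(w', s') \<in> M"
      "v = w + t *\<^sub>R v0" "r = s + t * c" "v = w' + t' *\<^sub>R v0" "r' = s' + t' * c"
      unfolding M'_def by blast
    with dominated_linear_graph_coordinate_unique[OF M(1) v0 ws(1,2)] have "t = t'"
      by auto
    moreover from this ws have "w = w'"
      by simp
    ultimately show "r = r'"
      using ws dominated_linear_graph_unique[OF M(1)] by auto
  next
    fix v r assume "(v, r) \<in> M'"
    then show "r \<le> p v"
      unfolding M'_def using dominated_linear_graph_extension_le[OF hom M(1) c] by blast
  qed
  ultimately show ?thesis
    by blast
qed

theorem hahn_banach_dominated_extension: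
  fixes p :: "'x::real_vector \<Rightarrow> real"
  assumes sub: "\<And>v w. p (v + w) \<le> p v + p w"
    and hom: "\<And>c v. c > 0 \<Longrightarrow> p (c *\<^sub>R v) = c * p v"
    and G0: "dominated_linear_graph p G0" "G0 \<noteq> {}"
  shows "\<exists>f. linear f \<and> (\<forall>v. f v \<le> p v) \<and> (\<forall>v r. (v, r) \<in> G0 \<longrightarrow> f v = r)"
proof -
  define A where "A = {G. G0 \<subseteq> G \<and> dominated_linear_graph p G}"
  have "\<exists>U\<in>A. \<forall>G\<in>C. G \<subseteq> U" if "C \<in> chains A" for C
  proof (cases "C = {}")
    case True
    then show ?thesis
      using G0 unfolding A_def by auto
  next
    case False
    with that have "dominated_linear_graph p (\<Union>C)" "G0 \<subseteq> \<Union>C"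
      unfolding A_def chains_def by (auto intro: dominated_linear_graph_Union)
    then show ?thesis
      unfolding A_def by blast
  qed
  from Zorn_Lemma2[OF ballI, OF this]
  obtain M where "M \<in> A" and maximal: "\<And>G. G \<in> A \<Longrightarrow> M \<subseteq> G \<Longrightarrow> G = M"
    by blast
  then have M: "dominated_linear_graph p M" "G0 \<subseteq> M"
    unfolding A_def by auto
  have total: "v \<in> Domain M" for v
  proof (rule ccontr)
    assume "v \<notin> Domain M"
    with dominated_linear_graph_extend[OF sub hom M(1)] M(2) G0(2)
    obtain G where "dominated_linear_graph p G" "M \<subseteq> G" "v \<in> Domain G"
      by blast
    with maximal[of G] M(2) \<open>v \<notin> Domain M\<close> show False
      unfolding A_def by auto
  qed
  define f where "f v = (SOME r. (v, r) \<in> M)" for v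
  have graph: "(v, f v) \<in> M" for v
    using total unfolding f_def by (meson DomainE someI)
  have f_eq: "f v = r" if "(v, r) \<in> M" for v r
    using dominated_linear_graph_unique[OF M(1) graph that] .
  have "linear f"
  proof (rule linearI)
    show "f (v + w) = f v + f w" for v w
      by (rule f_eq, rule dominated_linear_graph_add[OF M(1) graph graph])
    show "f (c *\<^sub>R v) = c *\<^sub>R f v" for c v
      using f_eq[OF dominated_linear_graph_scaleR[OF M(1) graph]] by simp
  qed
  moreover have "f v \<le> p v" for v
    using dominated_linear_graph_le[OF M(1) graph] .
  ultimately show ?thesis
    using f_eq M(2) by blast
qed

lemma dominated_linear_graph_line:
  fixes p :: "'x::real_vector \<Rightarrow> real"
  assumes sub: "\<And>v w. p (v + w) \<le> p v + p w"
    and hom: "\<And>c v. c > 0 \<Longrightarrow> p (c *\<^sub>R v) = c * p v"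
    and z: "z \<noteq> 0"
  shows "dominated_linear_graph p (range (\<lambda>t. (t *\<^sub>R z, t * p z)))"
  unfolding dominated_linear_graph_def
proof (intro conjI allI impI)
  fix v r v' r' assume "(v, r) \<in> range (\<lambda>t. (t *\<^sub>R z, t * p z)) \<and> (v', r') \<in> range (\<lambda>t. (t *\<^sub>R z, t * p z))"
  then obtain t t' where "v = t *\<^sub>R z" "r = t * p z" "v' = t' *\<^sub>R z" "r' = t' * p z"
    by blast
  then show "(v + v', r + r') \<in> range (\<lambda>t. (t *\<^sub>R z, t * p z))"
    by (auto intro!: image_eqI[of _ _ "t + t'"] simp: algebra_simps)
next
  fix v r c assume "(v, r) \<in> range (\<lambda>t. (t *\<^sub>R z, t * p z))"
  then obtain t where "v = t *\<^sub>R z" "r = t * p z"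
    by blast
  then show "(c *\<^sub>R v, c * r) \<in> range (\<lambda>t. (t *\<^sub>R z, t * p z))"
    by (auto intro!: image_eqI[of _ _ "c * t"])
next
  fix v r r' assume "(v, r) \<in> range (\<lambda>t. (t *\<^sub>R z, t * p z)) \<and> (v, r') \<in> range (\<lambda>t. (t *\<^sub>R z, t * p z))"
  then obtain t t' where "v = t *\<^sub>R z" "r = t * p z" "v = t' *\<^sub>R z" "r' = t' * p z"
    by blast
  with z show "r = r'"
    by (metis scaleR_cancel_right)
next
  have "p (2 *\<^sub>R 0) = 2 * p 0"
    by (rule hom) simp
  then have p0: "p 0 = 0"
    by simp
  fix v r assume "(v, r) \<in> range (\<lambda>t. (t *\<^sub>R z, t * p z))"
  then obtain t where v: "v = t *\<^sub>R z" "r = t * p z"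
    by blast
  show "r \<le> p v"
  proof (cases t "0::real" rule: linorder_cases)
    case less
    have "p (t *\<^sub>R z + (- t) *\<^sub>R z) \<le> p (t *\<^sub>R z) + p ((- t) *\<^sub>R z)"
      by (rule sub)
    moreover have "p ((- t) *\<^sub>R z) = (- t) * p z"
      using less by (intro hom) simp
    moreover have "t *\<^sub>R z + (- t) *\<^sub>R z = 0"
      by (simp add: scaleR_left_distrib[symmetric])
    ultimately show ?thesis
      using p0 v by simp
  next
    case equal
    then show ?thesis
      using p0 v by simp
  next
    case greater
    then show ?thesis
      using hom[OF greater, of z] v by simp
  qed
qed

corollary hahn_banach_sublinear:
  fixes p :: "'x::real_vector \<Rightarrow> real"
  assumes sub: "\<And>v w. p (v + w) \<le> p v + p w"
    and hom: "\<And>c v. c > 0 \<Longrightarrow> p (c *\<^sub>R v) = c * p v"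
    and z: "z \<noteq> 0"
  shows "\<exists>f. linear f \<and> (\<forall>v. f v \<le> p v) \<and> f z = p z"
proof -
  from hahn_banach_dominated_extension[OF sub hom dominated_linear_graph_line[OF sub hom z]]
  obtain f where "linear f" "\<forall>v. f v \<le> p v"
    "\<forall>v r. (v, r) \<in> range (\<lambda>t. (t *\<^sub>R z, t * p z)) \<longrightarrow> f v = r"
    by blast
  moreover have "(z, p z) \<in> range (\<lambda>t. (t *\<^sub>R z, t * p z))"
    using rangeI[of "\<lambda>t. (t *\<^sub>R z, t * p z)" 1] by simp
  ultimately show ?thesis
    by blast
qed

section \<open>The Minkowski functional and the dual space\<close>

definition minkowski_gauge :: "'x::real_vector set \<Rightarrow> 'x \<Rightarrow> real" where
  "minkowski_gauge N v = Inf {t. 0 < t \<and> (1/t) *\<^sub>R v \<in> N}"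

locale lcs_convex_zero_nbhd =
  fixes tau :: "'x::real_vector topology" and N :: "'x set"
  assumes lcs: "lcs tau" and open_N: "openin tau N" and convex_N: "convex N" and zero_N: "0 \<in> N"
begin

lemma absorbing: "\<exists>t>0. (1/t) *\<^sub>R v \<in> N"
proof -
  obtain r D where "r > 0" "v \<in> D" "\<And>c y. \<bar>c - 0\<bar> < r \<and> y \<in> D \<Longrightarrow> c *\<^sub>R y \<in> N"
    using scaleR_nbhd_lcs[OF lcs open_N, of 0 v] zero_N by auto
  then have "(1 / (2/r)) *\<^sub>R v \<in> N"
    by simp
  with \<open>r > 0\<close> show ?thesis
    by (intro exI[of _ "2/r"]) simp
qed

lemma minkowski_gauge_le: "0 < t \<Longrightarrow> (1/t) *\<^sub>R v \<in> N \<Longrightarrow> minkowski_gauge N v \<le> t"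
  unfolding minkowski_gauge_def by (rule cInf_lower) (auto intro: bdd_belowI[of _ 0])

lemma minkowski_gauge_nonneg: "0 \<le> minkowski_gauge N v"
  unfolding minkowski_gauge_def using absorbing[of v] by (intro cInf_greatest) auto

lemma scaleR_mem_if_minkowski_gauge_less:
  assumes "minkowski_gauge N v < s"
  shows "(1/s) *\<^sub>R v \<in> N"
proof -
  have "{t. 0 < t \<and> (1/t) *\<^sub>R v \<in> N} \<noteq> {}"
    using absorbing[of v] by auto
  from cInf_lessD[OF this] assms
  obtain t where t: "0 < t" "(1/t) *\<^sub>R v \<in> N" "t < s"
    unfolding minkowski_gauge_def by auto
  then have "(t/s) *\<^sub>R ((1/t) *\<^sub>R v) + (1 - t/s) *\<^sub>R 0 \<in> N"
    by (intro convexD[OF convex_N _ zero_N]) auto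
  with t show ?thesis
    by simp
qed

lemma minkowski_gauge_subadditive:
  "minkowski_gauge N (v + w) \<le> minkowski_gauge N v + minkowski_gauge N w"
proof (rule field_le_epsilon)
  fix e :: real assume "0 < e"
  define s where "s = minkowski_gauge N v + e/2"
  define s' where "s' = minkowski_gauge N w + e/2"
  have pos: "s > 0" "s' > 0"
    using minkowski_gauge_nonneg[of v] minkowski_gauge_nonneg[of w] \<open>0 < e\<close> by (auto simp: s_def s'_def)
  have "(s/(s+s')) *\<^sub>R ((1/s) *\<^sub>R v) + (s'/(s+s')) *\<^sub>R ((1/s') *\<^sub>R w) \<in> N"
    using pos \<open>0 < e\<close>
    by (intro convexD[OF convex_N] scaleR_mem_if_minkowski_gauge_less)
      (auto simp: s_def s'_def add_divide_distrib[symmetric])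
  moreover have "(s/(s+s')) *\<^sub>R ((1/s) *\<^sub>R v) + (s'/(s+s')) *\<^sub>R ((1/s') *\<^sub>R w) = (1/(s+s')) *\<^sub>R (v + w)"
    using pos by (simp add: scaleR_right_distrib)
  ultimately have "minkowski_gauge N (v + w) \<le> s + s'"
    using pos by (intro minkowski_gauge_le) auto
  then show "minkowski_gauge N (v + w) \<le> minkowski_gauge N v + minkowski_gauge N w + e"
    by (simp add: s_def s'_def)
qed

lemma minkowski_gauge_scaleR_le:
  assumes "c > 0"
  shows "minkowski_gauge N (c *\<^sub>R v) \<le> c * minkowski_gauge N v"
proof (rule field_le_epsilon)
  fix e :: real assume "0 < e"
  define s where "s = minkowski_gauge N v + e/c"
  have "s > 0"
    using minkowski_gauge_nonneg[of v] \<open>0 < e\<close> assms by (simp add: s_def add_nonneg_pos)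
  have "(1 / (c * s)) *\<^sub>R (c *\<^sub>R v) = (1/s) *\<^sub>R v"
    using assms by simp
  also have "\<dots> \<in> N"
    using \<open>0 < e\<close> assms by (intro scaleR_mem_if_minkowski_gauge_less) (simp add: s_def)
  finally have "minkowski_gauge N (c *\<^sub>R v) \<le> c * s"
    using \<open>s > 0\<close> assms by (intro minkowski_gauge_le) auto
  then show "minkowski_gauge N (c *\<^sub>R v) \<le> c * minkowski_gauge N v + e"
    using assms by (simp add: s_def algebra_simps)
qed

lemma minkowski_gauge_scaleR:
  assumes "c > 0"
  shows "minkowski_gauge N (c *\<^sub>R v) = c * minkowski_gauge N v"
proof -
  have "minkowski_gauge N ((1/c) *\<^sub>R (c *\<^sub>R v)) \<le> (1/c) * minkowski_gauge N (c *\<^sub>R v)"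
    using assms by (intro minkowski_gauge_scaleR_le) auto
  with assms have "c * minkowski_gauge N v \<le> minkowski_gauge N (c *\<^sub>R v)"
    by (simp add: field_simps)
  with minkowski_gauge_scaleR_le[OF assms, of v] show ?thesis
    by linarith
qed

lemma minkowski_gauge_less_one:
  assumes "v \<in> N"
  shows "minkowski_gauge N v < 1"
proof -
  obtain r D where r: "r > 0" "v \<in> D" "\<And>c y. \<bar>c - 1\<bar> < r \<and> y \<in> D \<Longrightarrow> c *\<^sub>R y \<in> N"
    using scaleR_nbhd_lcs[OF lcs open_N, of 1 v] assms by auto
  then have "(1 / (1 / (1 + r/2))) *\<^sub>R v \<in> N"
    by simp
  with r have "minkowski_gauge N v \<le> 1 / (1 + r/2)"
    by (intro minkowski_gauge_le) auto
  also have "\<dots> < 1"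
    using r by (simp add: field_simps)
  finally show ?thesis .
qed

lemma minkowski_gauge_ge_one: "z \<notin> N \<Longrightarrow> 1 \<le> minkowski_gauge N z"
  using scaleR_mem_if_minkowski_gauge_less[of z 1] by force

end

lemma continuous_map_linear_lcs:
  fixes f :: "'x::real_vector \<Rightarrow> real"
  assumes lcs: "lcs tau" and f: "linear f" and N: "openin tau N" "0 \<in> N"
    and bounded: "\<And>v. v \<in> N \<Longrightarrow> \<bar>f v\<bar> < 1"
  shows "continuous_map tau euclideanreal f"
  unfolding continuous_map_def
proof (intro conjI allI impI)
  fix S :: "real set" assume "openin euclideanreal S"
  show "openin tau {x \<in> topspace tau. f x \<in> S}"
  proof (subst openin_subopen, intro ballI)
    fix x assume "x \<in> {x \<in> topspace tau. f x \<in> S}"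
    then obtain e where "e > 0" "ball (f x) e \<subseteq> S"
      using \<open>openin euclideanreal S\<close> open_contains_ball by force
    define U where "U = {w. (1/e) *\<^sub>R w + (- (1/e) *\<^sub>R x) \<in> N}"
    have "f w \<in> S" if "w \<in> U" for w
    proof -
      have "\<bar>f ((1/e) *\<^sub>R (w - x))\<bar> < 1"
        using that bounded by (simp add: U_def scaleR_right_diff_distrib)
      then have "\<bar>f w - f x\<bar> < e"
        using \<open>e > 0\<close> by (simp add: linear_scale[OF f] linear_diff[OF f] abs_mult field_simps)
      with \<open>ball (f x) e \<subseteq> S\<close> show ?thesis
        by (auto simp: dist_real_def abs_minus_commute)
    qed
    moreover have "openin tau U"
      unfolding U_def by (rule openin_affine_vimage_lcs[OF lcs N(1)])
    moreover have "x \<in> U"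
      using N(2) by (simp add: U_def)
    ultimately show "\<exists>U. openin tau U \<and> x \<in> U \<and> U \<subseteq> {x \<in> topspace tau. f x \<in> S}"
      using lcs by auto
  qed
qed simp

lemma lcs_dual_separates:
  fixes tau :: "'x::real_vector topology"
  assumes lcs: "lcs tau" and "z \<noteq> 0"
  shows "\<exists>f\<in>dual tau. f z = 1"
proof -
  obtain U V where UV: "openin tau U" "openin tau V" "0 \<in> U" "z \<in> V" "disjnt U V"
    using lcs \<open>z \<noteq> 0\<close> unfolding lcs_def Hausdorff_space_def by (metis UNIV_I)
  obtain W where W: "openin tau W" "convex W" "0 \<in> W" "W \<subseteq> U"
    using lcs_convex_nbhd[OF lcs UV(1,3)] by blast
  define N where "N = W \<inter> {v. (-1) *\<^sub>R v + 0 \<in> W}"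
  have "openin tau N"
    unfolding N_def by (intro openin_Int W(1) openin_affine_vimage_lcs[OF lcs W(1)])
  moreover have "convex N"
    unfolding N_def by (intro convex_Int W(2) convex_affine_vimage)
  ultimately interpret lcs_convex_zero_nbhd tau N
    using lcs W(3) by unfold_locales (auto simp: N_def)
  have N_uminus: "- v \<in> N" if "v \<in> N" for v
    using that by (simp add: N_def)
  have "z \<notin> N"
    using UV(4,5) W(4) by (auto simp: N_def disjnt_def)
  obtain f where f: "linear f" "\<And>v. f v \<le> minkowski_gauge N v" "f z = minkowski_gauge N z"
    using hahn_banach_sublinear[of "minkowski_gauge N" z] minkowski_gauge_subadditive
      minkowski_gauge_scaleR \<open>z \<noteq> 0\<close> by blast
  have "\<bar>f v\<bar> < 1" if "v \<in> N" for v
    using f(2)[of v] f(2)[of "- v"] minkowski_gauge_less_one[OF that]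
      minkowski_gauge_less_one[OF N_uminus[OF that]] linear_neg[OF f(1), of v]
    by linarith
  then have "continuous_map tau euclideanreal f"
    using continuous_map_linear_lcs[OF lcs f(1) open_N zero_N] by blast
  moreover have "1 \<le> f z"
    using minkowski_gauge_ge_one[OF \<open>z \<notin> N\<close>] f(3) by simp
  moreover have "linear (\<lambda>v. f v / f z)"
    using f(1) by (simp add: linear_iff add_divide_distrib)
  ultimately have "(\<lambda>v. f v / f z) \<in> dual tau"
    unfolding dual_def divide_inverse by (auto intro: continuous_map_real_mult_right)
  with \<open>1 \<le> f z\<close> show ?thesis
    by (intro bexI[of _ "\<lambda>v. f v / f z"]) auto
qed

lemma dual_linear_combination:
  assumes "f \<in> dual tau" "g \<in> dual tau"
  shows "(\<lambda>v. c * f v + d * g v) \<in> dual tau"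
proof -
  have "linear (\<lambda>v. c * f v + d * g v)"
    using assms unfolding dual_def linear_iff by (simp add: algebra_simps)
  with assms show ?thesis
    unfolding dual_def by (auto intro: continuous_map_add continuous_map_real_mult_left)
qed

section \<open>A convex neighbourhood on which a functional drops\<close>

text \<open>If the weight \<open>v\<close> of \<open>t\<close> is small, \<open>u s + v t\<close> is the midpoint of two points of \<open>W\<close>;
  otherwise \<open>y\<close> has dropped by at least \<open>r/4\<close>.\<close>

lemma convex_combination_escape_bound:
  fixes y :: "'x::real_vector \<Rightarrow> real"
  assumes y: "linear y" and W: "convex W" "x \<in> W"
    and s: "2 *\<^sub>R s - x \<in> W" "y s < y x + r/4"
    and t: "y t - y x < -1/2" "v < r \<Longrightarrow> 2 *\<^sub>R (v *\<^sub>R (t - x)) + x \<in> W"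
    and uv: "0 \<le> u" "0 \<le> v" "u + v = 1"
    and outside: "u *\<^sub>R s + v *\<^sub>R t \<notin> W" and "0 < r"
  shows "r/4 \<le> y x - y (u *\<^sub>R s + v *\<^sub>R t)"
proof (cases "v < r")
  case True
  have "(1/2) *\<^sub>R (u *\<^sub>R (2 *\<^sub>R s - x) + v *\<^sub>R x) + (1/2) *\<^sub>R (2 *\<^sub>R (v *\<^sub>R (t - x)) + x) \<in> W"
    using convexD[OF W(1) s(1) W(2) uv] t(2)[OF True] by (rule convexD[OF W(1)]) auto
  moreover have "v = 1 - u"
    using uv(3) by simp
  then have "(1/2) *\<^sub>R (u *\<^sub>R (2 *\<^sub>R s - x) + v *\<^sub>R x) + (1/2) *\<^sub>R (2 *\<^sub>R (v *\<^sub>R (t - x)) + x)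
      = u *\<^sub>R s + v *\<^sub>R t"
    by (simp add: algebra_simps) (simp flip: scaleR_add_left)
  ultimately show ?thesis
    using outside by simp
next
  case False
  have "y x - y (u *\<^sub>R s + v *\<^sub>R t) = u * (y x - y s) + v * (y x - y t)"
    using uv(3) linear_add[OF y] linear_scale[OF y] by (simp add: algebra_simps flip: distrib_right)
  moreover have "u * (- (r/4)) \<le> u * (y x - y s)"
    using s(2) uv(1) by (intro mult_left_mono) auto
  moreover have "v * (1/2) \<le> v * (y x - y t)"
    using t(1) uv(2) by (intro mult_left_mono) auto
  moreover have "u * (r/4) \<le> 1 * (r/4)"
    using uv \<open>0 < r\<close> by (intro mult_right_mono) auto
  ultimately show ?thesis
    using False by linarith
qed

lemma lcs_nbhd_shrinks_into:
  fixes tau :: "'x::real_vector topology"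
  assumes lcs: "lcs tau" and W: "openin tau W" "x \<in> W"
    and y: "y \<in> dual tau" "y x - y a = 1"
  obtains r U where "r > 0" "openin tau U" "convex U" "a \<in> U"
    "\<And>t. t \<in> U \<Longrightarrow> y t - y x < -1/2"
    "\<And>t c. t \<in> U \<Longrightarrow> 0 \<le> c \<Longrightarrow> c < r \<Longrightarrow> 2 *\<^sub>R (c *\<^sub>R (t - x)) + x \<in> W"
proof -
  have "openin tau {v. 2 *\<^sub>R v + x \<in> W}" "0 *\<^sub>R (a - x) \<in> {v. 2 *\<^sub>R v + x \<in> W}"
    using openin_affine_vimage_lcs[OF lcs W(1)] W(2) by auto
  from scaleR_nbhd_lcs[OF lcs this] obtain r D where r: "r > 0" "openin tau D" "a - x \<in> D"
      "\<And>c w. \<bar>c\<bar> < r \<Longrightarrow> w \<in> D \<Longrightarrow> 2 *\<^sub>R (c *\<^sub>R w) + x \<in> W"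
    by auto
  define U0 where "U0 = {t. 1 *\<^sub>R t + (- x) \<in> D} \<inter> {t. y t \<in> {..< y x - 1/2}}"
  have "openin tau U0"
    unfolding U0_def
    by (intro openin_Int openin_affine_vimage_lcs[OF lcs r(2)] openin_dual_vimage[OF lcs y(1)]) auto
  moreover have "a \<in> U0"
    using r(3) y(2) by (simp add: U0_def)
  ultimately obtain U where U: "openin tau U" "convex U" "a \<in> U" "U \<subseteq> U0"
    using lcs_convex_nbhd[OF lcs] by blast
  show ?thesis
  proof (rule that[OF r(1) U(1-3)])
    show "y t - y x < -1/2" if "t \<in> U" for t
      using that U(4) by (auto simp: U0_def)
    show "2 *\<^sub>R (c *\<^sub>R (t - x)) + x \<in> W" if "t \<in> U" "0 \<le> c" "c < r" for t c
      using that U(4) r(4)[of c "t - x"] by (auto simp: U0_def)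
  qed
qed

lemma lcs_separating_convex_nbhd:
  fixes tau :: "'x::real_vector topology"
  assumes lcs: "lcs tau" and W: "openin tau W" "convex W" "x \<in> W"
    and y: "y \<in> dual tau" "y x - y a = 1"
  obtains V \<eta> where "openin tau V" "convex V" "x \<in> V" "a \<in> V" "\<eta> > 0"
    "\<And>q. q \<in> V \<Longrightarrow> q \<notin> W \<Longrightarrow> \<eta> \<le> y x - y q"
proof -
  have lin: "linear y"
    using y(1) by (simp add: dual_def)
  obtain r U where r: "r > 0" "openin tau U" "convex U" "a \<in> U"
    "\<And>t. t \<in> U \<Longrightarrow> y t - y x < -1/2"
    "\<And>t c. t \<in> U \<Longrightarrow> 0 \<le> c \<Longrightarrow> c < r \<Longrightarrow> 2 *\<^sub>R (c *\<^sub>R (t - x)) + x \<in> W"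
    using lcs_nbhd_shrinks_into[OF lcs W(1,3) y] by blast
  define W' where "W' = {s. 2 *\<^sub>R s + (- x) \<in> W} \<inter> {s. y s \<in> {..< y x + r/4}}"
  have W'_open: "openin tau W'"
    unfolding W'_def
    by (intro openin_Int openin_affine_vimage_lcs[OF lcs W(1)] openin_dual_vimage[OF lcs y(1)]) auto
  have "convex {s. y s \<in> {..< y x + r/4}}"
    using convex_linear_vimage[OF lin, of "{..< y x + r/4}"] by (simp add: vimage_def)
  then have W'_convex: "convex W'"
    unfolding W'_def by (intro convex_Int convex_affine_vimage[OF W(2)])
  have "x \<in> W'"
    using W(3) r(1) by (simp add: W'_def scaleR_2)
  then have nonempty: "W' \<noteq> {}" "U \<noteq> {}"
    using r(4) by auto
  have V: "openin tau (convex hull (W' \<union> U))" "convex (convex hull (W' \<union> U))"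
    using openin_convex_hull_union_lcs[OF lcs W'_open W'_convex nonempty(1) r(2,3) nonempty(2)] by auto
  have hull: "convex hull (W' \<union> U) =
      {u *\<^sub>R s + v *\<^sub>R t | u v s t. u \<ge> 0 \<and> v \<ge> 0 \<and> u + v = 1 \<and> s \<in> W' \<and> t \<in> U}"
    using W'_convex nonempty(1) r(3) nonempty(2) by (rule convex_hull_union_two_real_vector)
  have bound: "r/4 \<le> y x - y q" if q_hull: "q \<in> convex hull (W' \<union> U)" and q_out: "q \<notin> W" for q
  proof -
    obtain u v s t where q: "q = u *\<^sub>R s + v *\<^sub>R t" "0 \<le> u" "0 \<le> v" "u + v = 1" "s \<in> W'" "t \<in> U"
      using q_hull unfolding hull by blast
    then have "2 *\<^sub>R s - x \<in> W" "y s < y x + r/4"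
      by (simp_all add: W'_def)
    from convex_combination_escape_bound[OF lin W(2,3) this r(5)[OF q(6)] r(6)[OF q(6) q(3)] q(2-4)]
    show ?thesis
      using q_out q(1) r(1) by simp
  qed
  moreover have "x \<in> convex hull (W' \<union> U)" "a \<in> convex hull (W' \<union> U)"
    using \<open>x \<in> W'\<close> r(4) by (auto intro: hull_inc)
  ultimately show ?thesis
    using that[OF V _ _ _ bound] r(1) by simp
qed

section \<open>Convexity of the closure of the domain\<close>

lemma lcs_nonconvex_closure_witness:
  fixes tau :: "'x::real_vector topology"
  assumes lcs: "lcs tau" and "\<not> convex (tau closure_of D)"
  obtains a b l where "a \<in> D" "b \<in> D" "0 \<le> l" "l \<le> 1" "(1 - l) *\<^sub>R a + l *\<^sub>R b \<notin> tau closure_of D"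
proof -
  obtain a' b' l where ab': "a' \<in> tau closure_of D" "b' \<in> tau closure_of D" "0 \<le> l" "l \<le> 1"
    "(1 - l) *\<^sub>R a' + l *\<^sub>R b' \<notin> tau closure_of D"
    using assms(2) unfolding convex_alt by blast
  define G where "G = {z. (1 - l) *\<^sub>R fst z + l *\<^sub>R snd z \<notin> tau closure_of D}"
  have "openin tau (topspace tau - tau closure_of D)"
    by (rule openin_diff) auto
  from openin_continuous_map_preimage[OF continuous_map_linear_combination_lcs[OF lcs] this]
  have "openin (prod_topology tau tau) G"
    using lcs by (simp add: G_def)
  moreover have "(a', b') \<in> G"
    using ab'(5) by (simp add: G_def)
  ultimately obtain A B where AB: "openin tau A" "openin tau B" "a' \<in> A" "b' \<in> B" "A \<times> B \<subseteq> G"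
    unfolding openin_prod_topology_alt by meson
  obtain a b where "a \<in> D" "a \<in> A" "b \<in> D" "b \<in> B"
    using ab'(1,2) AB(1-4) unfolding in_closure_of by blast
  moreover from this AB(5) have "(1 - l) *\<^sub>R a + l *\<^sub>R b \<notin> tau closure_of D"
    by (auto simp: G_def)
  ultimately show ?thesis
    using that ab'(3,4) by blast
qed

lemma monotone_op_convex_combination_gap:
  assumes mono: "monotone_op T"
    and T: "(a, as) \<in> T" "(b, bs) \<in> T" "(u, us) \<in> T" and lin: "linear as" "linear bs" "linear us"
    and l: "0 \<le> l" "l \<le> 1"
    and x: "x = (1 - l) *\<^sub>R a + l *\<^sub>R b"
  shows "- (l * (1 - l) * (bs b - bs a - as b + as a))
    \<le> (1 - l) * (as x - as u) + l * (bs x - bs u) - us x + us u"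
proof -
  have mono_a: "0 \<le> us u - us a - as u + as a" and mono_b: "0 \<le> us u - us b - bs u + bs b"
    using mono T unfolding monotone_op_def by fast+
  have at_x: "\<phi> x = (1 - l) * \<phi> a + l * \<phi> b" if "linear \<phi>" for \<phi>
    unfolding x using that by (simp add: linear_add linear_scale)
  have "(1 - l) * (as x - as u) + l * (bs x - bs u) - us x + us u
      = (1 - l) * (us u - us a - as u + as a) + l * (us u - us b - bs u + bs b)
        - l * (1 - l) * (bs b - bs a - as b + as a)"
    unfolding at_x[OF lin(1)] at_x[OF lin(2)] at_x[OF lin(3)]
    by (simp add: algebra_simps)
  moreover have "0 \<le> (1 - l) * (us u - us a - as u + as a)" "0 \<le> l * (us u - us b - bs u + bs b)"
    using mono_a mono_b l by simp_all
  ultimately show ?thesis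
    by linarith
qed

lemma fitz_restr_less_cpl:
  assumes mono: "monotone_op T"
    and lin: "\<And>u us. (u, us) \<in> T \<Longrightarrow> linear us"
    and T: "(a, as) \<in> T" "(b, bs) \<in> T" and l: "0 \<le> l" "l \<le> 1"
    and x: "x = (1 - l) *\<^sub>R a + l *\<^sub>R b"
    and f: "linear f" and sep: "\<And>u us. (u, us) \<in> T \<Longrightarrow> u \<in> V \<Longrightarrow> \<eta> \<le> f x - f u"
    and s: "0 \<le> s" "l * (1 - l) * (bs b - bs a - as b + as a) < s * \<eta>"
    and xs: "xs = (\<lambda>v. (1 - l) * as v + l * bs v + s * f v)"
  shows "fitz (restr T V) (x, xs) < ereal (cpl (x, xs))"
proof -
  define \<delta> where "\<delta> = s * \<eta> - l * (1 - l) * (bs b - bs a - as b + as a)"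
  have "us x + xs u - us u \<le> xs x - \<delta>" if "(u, us) \<in> T" "u \<in> V" for u us
  proof -
    have "s * \<eta> \<le> s * (f x - f u)"
      using mult_left_mono[OF sep[OF that] s(1)] .
    with monotone_op_convex_combination_gap[OF mono T that(1) lin[OF T(1)] lin[OF T(2)] lin[OF that(1)] l x]
    show ?thesis
      by (simp add: xs \<delta>_def algebra_simps)
  qed
  then have "fitz (restr T V) (x, xs) \<le> ereal (xs x - \<delta>)"
    unfolding fitz_def restr_def by (auto intro: Sup_least)
  also have "\<dots> < ereal (cpl (x, xs))"
    using s(2) by (simp add: cpl_def \<delta>_def)
  finally show ?thesis .
qed

lemma mem_prX_lt_if_separated:
  fixes tau :: "'x::real_vector topology"
  assumes T: "T \<in> MX tau" and T_ab: "(a, as) \<in> T" "(b, bs) \<in> T" and l: "0 \<le> l" "l \<le> 1"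
    and x: "x = (1 - l) *\<^sub>R a + l *\<^sub>R b"
    and f: "f \<in> dual tau" and "\<eta> > 0" and sep: "\<And>u us. (u, us) \<in> T \<Longrightarrow> u \<in> V \<Longrightarrow> \<eta> \<le> f x - f u"
  shows "x \<in> prX_lt tau T V"
proof -
  have T_dual: "T \<subseteq> UNIV \<times> dual tau" and mono: "monotone_op T"
    using T by (auto simp: MX_def)
  define s where "s = (\<bar>l * (1 - l) * (bs b - bs a - as b + as a)\<bar> + 1) / \<eta>"
  define xs where "xs = (\<lambda>v. (1 - l) * as v + l * bs v + s * f v)"
  have "as \<in> dual tau" "bs \<in> dual tau"
    using T_ab T_dual by auto
  then have "(\<lambda>v. (1 - l) * as v + l * bs v) \<in> dual tau"
    by (rule dual_linear_combination)
  from dual_linear_combination[OF this f, of 1 s] have "xs \<in> dual tau"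
    unfolding xs_def by simp
  moreover have "fitz (restr T V) (x, xs) < ereal (cpl (x, xs))"
  proof (rule fitz_restr_less_cpl[OF mono _ T_ab l x _ sep _ _ xs_def])
    show "linear us" if "(u, us) \<in> T" for u us
      using that T_dual by (auto simp: dual_def)
    show "linear f"
      using f by (simp add: dual_def)
    show "0 \<le> s" "l * (1 - l) * (bs b - bs a - as b + as a) < s * \<eta>"
      using \<open>\<eta> > 0\<close> by (auto simp: s_def)
  qed
  ultimately show ?thesis
    unfolding prX_lt_def by blast
qed

lemma convex_closure_Domain_if_prX_lt_located:
  fixes tau :: "'x::real_vector topology"
  assumes lcs: "lcs tau" and T: "T \<in> MX tau"
    and located: "\<And>V. openin tau V \<Longrightarrow> convex V \<Longrightarrow> V \<inter> Domain T \<noteq> {} \<Longrightarrow>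
      prX_lt tau T V \<inter> V \<subseteq> tau closure_of (Domain T)"
  shows "convex (tau closure_of (Domain T))"
proof (rule ccontr)
  assume "\<not> convex (tau closure_of (Domain T))"
  then obtain a b l where ab: "a \<in> Domain T" "b \<in> Domain T" "0 \<le> l" "l \<le> 1"
    and x_out: "(1 - l) *\<^sub>R a + l *\<^sub>R b \<notin> tau closure_of (Domain T)"
    using lcs_nonconvex_closure_witness[OF lcs] by blast
  define x where "x = (1 - l) *\<^sub>R a + l *\<^sub>R b"
  have D_closure: "Domain T \<subseteq> tau closure_of (Domain T)"
    using lcs by (simp add: closure_of_subset)
  have "openin tau (topspace tau - tau closure_of (Domain T))"
    by (rule openin_diff) auto
  then obtain W where W: "openin tau W" "convex W" "x \<in> W" "W \<inter> tau closure_of (Domain T) = {}"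
    using lcs_convex_nbhd[OF lcs, of _ x] x_out lcs unfolding x_def by fastforce
  have "x - a \<noteq> 0"
    using x_out ab(1) D_closure unfolding x_def by auto
  then obtain f where f: "f \<in> dual tau" "f x - f a = 1"
    using lcs_dual_separates[OF lcs] by (metis dual_def linear_diff mem_Collect_eq)
  obtain V \<eta> where V: "openin tau V" "convex V" "x \<in> V" "a \<in> V" "\<eta> > 0"
    and sep: "\<And>q. q \<in> V \<Longrightarrow> q \<notin> W \<Longrightarrow> \<eta> \<le> f x - f q"
    using lcs_separating_convex_nbhd[OF lcs W(1-3) f] by blast
  obtain as bs where "(a, as) \<in> T" "(b, bs) \<in> T"
    using ab(1,2) by blast
  from mem_prX_lt_if_separated[OF T this ab(3,4) x_def f(1) V(5)]
  have "x \<in> prX_lt tau T V"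
    using sep W(4) D_closure by blast
  with located[OF V(1,2)] V(3,4) ab(1) x_out show False
    unfolding x_def by blast
qed

lemma prX_lt_subset_prX_le: "prX_lt tau T V \<subseteq> prX_le tau T V"
  unfolding prX_lt_def prX_le_def by (auto intro: less_imp_le)

lemma prX_lt_Int_eq_empty_if_V_NI: "V_NI tau V T \<Longrightarrow> prX_lt tau T V \<inter> V = {}"
  unfolding V_NI_def prX_lt_def by (auto simp: not_less[symmetric])

theorem theorem2p7:
  fixes tau :: "'x::real_vector topology"
    and T :: "('x \<times> ('x \<Rightarrow> real)) set"
  assumes "lcs tau" and "T \<in> MX tau"
  shows "((\<forall>V. openin tau V \<and> convex V \<and> V \<inter> Domain T \<noteq> {} \<longrightarrow>
              prX_lt tau T V \<inter> V \<subseteq> tau closure_of (Domain T))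
            \<longrightarrow> convex (tau closure_of (Domain T)))
       \<and> (locatable tau T (tau closure_of (Domain T)) \<longrightarrow> convex (tau closure_of (Domain T)))
       \<and> (locally_NI tau T \<longrightarrow> convex (tau closure_of (Domain T)))"
proof (intro conjI impI)
  show "convex (tau closure_of (Domain T))"
    if "\<forall>V. openin tau V \<and> convex V \<and> V \<inter> Domain T \<noteq> {} \<longrightarrow>
          prX_lt tau T V \<inter> V \<subseteq> tau closure_of (Domain T)"
    using that by (intro convex_closure_Domain_if_prX_lt_located[OF assms]) blast
  show "convex (tau closure_of (Domain T))" if "locatable tau T (tau closure_of (Domain T))"
    using that prX_lt_subset_prX_le unfolding locatable_def locates_def
    by (intro convex_closure_Domain_if_prX_lt_located[OF assms]) blast
  show "convex (tau closure_of (Domain T))" if "locally_NI tau T"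
    using that prX_lt_Int_eq_empty_if_V_NI unfolding locally_NI_def
    by (intro convex_closure_Domain_if_prX_lt_located[OF assms]) blast
qed

end
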